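(* Let $d\ge 3$ be an odd integer, let $\omega=e^{2\pi i/d}$, $\tau=-e^{\pi i/d}$, and let $X,Z$ be the operators on $\mathbb{C}^d$ (basis $\{|r\rangle : r\in\mathbb{Z}/d\mathbb{Z}\}$) given by $Z|r\rangle=\omega^r|r\rangle$, $X|r\rangle=|r+1\rangle$, with displacement operators $D_{j,k}=\tau^{jk}X^jZ^k$. Let $x_0=-2-\sqrt{d+1}$ (with $\sqrt{d+1}>0$), let $\sqrt{x_0}$ be a purely imaginary square root of $x_0$, and let $|\Psi\rangle=N(\sqrt{x_0},v_1,\dots,v_{d-1})^{\mathrm T}$, where $|v_j|=1$ and $v_{-j}=-v_j^*$ for all $j\neq 0$ (indices mod $d$), and $N^2=1/(d-1-x_0)$. Denote by $\psi_r$ the components of $|\Psi\rangle$. Then for every $j\not\equiv 0 \pmod d$, $$\sqrt{d+1}\,\langle\Psi|X^{-2j}|\Psi\rangle=\frac{\psi_j^2}{|\psi_j|^2}\quad\Longleftrightarrow\quad \sum_{k=1}^{d-1}\langle\Psi|D_{-2j,k}|\Psi\rangle=-\sqrt{d+1}\,\langle\Psi|X^{-2j}|\Psi\rangle .$$ Consequently, the first identity holds for all $j\not\equiv0$ if and only if $\sum_{k=1}^{d-1}\langle\Psi|D_{j,k}|\Psi\rangle=-\sqrt{d+1}\,\langle\Psi|X^{j}|\Psi\rangle$ holds for all $j\not\equiv 0$.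
   Context: Indices of vector components and of $D_{j,k}$ are taken modulo $d$; $^*$ denotes complex conjugation. The identity $\sqrt{d+1}\langle\Psi|X^{-2j}|\Psi\rangle=\psi_j^2/|\psi_j|^2$ is called the $X$-overlap equation. *)

theory Defs
  imports Complex_Main
begin

text \<open>Vectors in C^d are functions int => complex, read at indices in {0..<d};
  all index arithmetic is reduced mod d.\<close>

definition omega :: "nat \<Rightarrow> complex" where
  "omega d = cis (2 * pi / real d)"

definition tau :: "nat \<Rightarrow> complex" where
  "tau d = - cis (pi / real d)"

text \<open>X|r> = |r+1>, hence (X^m psi)_s = psi_(s-m).\<close>
definition Xpow :: "nat \<Rightarrow> int \<Rightarrow> (int \<Rightarrow> complex) \<Rightarrow> (int \<Rightarrow> complex)" where
  "Xpow d m \<psi> = (\<lambda>s. \<psi> ((s - m) mod int d))"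

definition Zpow :: "nat \<Rightarrow> int \<Rightarrow> (int \<Rightarrow> complex) \<Rightarrow> (int \<Rightarrow> complex)" where
  "Zpow d k \<psi> = (\<lambda>s. omega d powi ((s mod int d) * k) * \<psi> (s mod int d))"

definition Dop :: "nat \<Rightarrow> int \<Rightarrow> int \<Rightarrow> (int \<Rightarrow> complex) \<Rightarrow> (int \<Rightarrow> complex)" where
  "Dop d j k \<psi> = (\<lambda>s. tau d powi (j * k) * Xpow d j (Zpow d k \<psi>) s)"

definition braket :: "nat \<Rightarrow> (int \<Rightarrow> complex) \<Rightarrow> (int \<Rightarrow> complex) \<Rightarrow> complex" where
  "braket d \<phi> \<psi> = (\<Sum>s\<in>{0..<int d}. cnj (\<phi> s) * \<psi> s)"

definition Psi :: "nat \<Rightarrow> real \<Rightarrow> complex \<Rightarrow> (int \<Rightarrow> complex) \<Rightarrow> int \<Rightarrow> complex" where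
  "Psi d N s0 v r = complex_of_real N * (if r mod int d = 0 then s0 else v (r mod int d))"

end

theory Submission
  imports Defs
begin

(* Let h = (d + 1) / 2 be the inverse of 2 modulo d, so that tau = omega^h and
   (D_{m,k} psi)_s = omega^(k (h m + s - m)) psi_(s-m).  Summing <psi|D_{m,k}|psi> over all k
   in Z/d, the character sum kills every s except s = m h, leaving d psi*_(mh) psi_(-mh); the
   term k = 0 is <psi|X^m|psi>.  For m = -2j and Psi this turns the displacement sum into
   -d N^2 v_j^2 - <Psi|X^(-2j)|Psi>, and the normalisation d N^2 sqrt(d+1) = sqrt(d+1) - 1
   makes the displacement-sum equation at -2j equivalent to the X-overlap equation at j.
   The second claim follows because j -> -2j permutes the nonzero residues modulo d. *)

lemma omega_powi: "omega d powi n = cis (2 * pi * real_of_int n / real d)"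
  by (simp add: omega_def cis_power_int mult_ac)

lemma omega_powi_eq_1_iff:
  assumes "d > 0"
  shows "omega d powi n = 1 \<longleftrightarrow> int d dvd n"
proof
  assume "omega d powi n = 1"
  then have "cos (2 * pi * real_of_int n / real d) = 1"
    by (metis omega_powi cis.sel(1) one_complex.sel(1))
  then obtain q where "2 * pi * real_of_int n / real d = real_of_int q * 2 * pi"
    using cos_one_2pi_int by blast
  then have "real_of_int n = real_of_int (q * int d)"
    using assms by (simp add: field_simps)
  then show "int d dvd n"
    by (metis dvd_triv_right of_int_eq_iff)
next
  assume "int d dvd n"
  then obtain q where "n = int d * q" ..
  moreover have "omega d powi int d = 1"
    using assms by (simp add: omega_def DeMoivre)
  ultimately show "omega d powi n = 1"
    by (simp add: power_int_mult)
qed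

lemma sum_omega_powi:
  assumes "d > 0"
  shows "(\<Sum>k\<in>{0..<int d}. omega d powi (k * n)) = (if int d dvd n then of_nat d else 0)"
proof -
  define z where "z = omega d powi n"
  have "(\<Sum>k\<in>{0..<int d}. omega d powi (k * n)) = (\<Sum>k\<in>int ` {..<d}. z powi k)"
    by (simp add: z_def lessThan_atLeast0 image_int_atLeastLessThan mult.commute[of _ n]
        power_int_mult)
  also have "\<dots> = (\<Sum>k<d. z ^ k)"
    by (simp add: sum.reindex)
  finally have geometric: "(\<Sum>k\<in>{0..<int d}. omega d powi (k * n)) = (\<Sum>k<d. z ^ k)" .
  have "z ^ d = 1"
    using omega_powi_eq_1_iff[OF assms, of "n * int d"] by (simp add: z_def power_int_mult)
  moreover have "z = 1 \<longleftrightarrow> int d dvd n"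
    using omega_powi_eq_1_iff[OF assms] by (simp add: z_def)
  ultimately show ?thesis
    using geometric by (auto simp: geometric_sum)
qed

lemma tau_eq_omega_powi:
  assumes "2 * h = int d + 1"
  shows "tau d = omega d powi h"
proof -
  have "2 * real_of_int h = real d + 1"
    using arg_cong[OF assms, of real_of_int] by simp
  moreover have "d > 0"
    using assms by presburger
  ultimately have "2 * pi * real_of_int h / real d = pi + pi / real d"
    by (simp add: field_simps)
  then show ?thesis
    by (simp add: omega_powi tau_def cis_mult[symmetric] cis_pi)
qed

lemma tau_powi_mod:
  assumes "odd d"
  shows "tau d powi (n mod int d) = tau d powi n"
proof -
  define h where "h = (int d + 1) div 2"
  have h: "2 * h = int d + 1"
    using assms unfolding h_def by presburger
  have "d > 0"
    using assms by presburger
  have "tau d powi (int d * (n div int d)) = 1"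
    using omega_powi_eq_1_iff[OF \<open>d > 0\<close>, of "h * (int d * (n div int d))"]
    by (simp add: tau_eq_omega_powi[OF h] power_int_mult)
  then show ?thesis
    using div_mult_mod_eq[of n "int d"] power_int_add[of "tau d" "int d * (n div int d)" "n mod int d"]
    by (simp add: tau_def mult.commute)
qed

lemma Xpow_mod: "Xpow d (m mod int d) \<psi> = Xpow d m \<psi>"
  by (simp add: Xpow_def mod_diff_right_eq)

lemma Dop_mod:
  assumes "odd d"
  shows "Dop d (m mod int d) k \<psi> = Dop d m k \<psi>"
proof -
  have "tau d powi (m mod int d * k) = tau d powi (m * k)"
    by (metis assms mod_mult_left_eq tau_powi_mod)
  then show ?thesis
    by (simp add: Dop_def Xpow_mod)
qed

lemma Dop_0: "Dop d m 0 \<psi> = Xpow d m \<psi>"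
  by (simp add: Dop_def Xpow_def Zpow_def)

lemma Dop_apply:
  assumes "2 * h = int d + 1" and periodic: "\<And>x. \<psi> (x mod int d) = \<psi> x"
  shows "Dop d m k \<psi> s = omega d powi ((h * m + (s - m) mod int d) * k) * \<psi> ((s - m) mod int d)"
  using assms by (simp add: Dop_def Xpow_def Zpow_def tau_eq_omega_powi power_int_add omega_def
      distrib_right power_int_mult mult.assoc)

lemma sum_braket_Dop:
  assumes h: "2 * h = int d + 1" and periodic: "\<And>x. \<psi> (x mod int d) = \<psi> x"
  shows "(\<Sum>k\<in>{0..<int d}. braket d \<psi> (Dop d m k \<psi>))
           = of_nat d * cnj (\<psi> (m * h)) * \<psi> (- (m * h))"
proof -
  have "d > 0"
    using h by presburger
  define r where "r s = (s - m) mod int d" for s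
  define s\<^sub>0 where "s\<^sub>0 = (m * h) mod int d"
  have hm: "m * h - m = - (m * h) + m * int d"
    using arg_cong[OF h, of "(*) m"] by (simp add: algebra_simps)
  have resonance: "int d dvd (h * m + r s) \<longleftrightarrow> s = s\<^sub>0" if "s \<in> {0..<int d}" for s
  proof -
    have "int d dvd (h * m + r s) \<longleftrightarrow> int d dvd (h * m + (s - m))"
      unfolding r_def dvd_eq_mod_eq_0 mod_add_right_eq ..
    also have "h * m + (s - m) = (s - m * h) + m * int d"
      using hm by (simp add: algebra_simps)
    also have "int d dvd \<dots> \<longleftrightarrow> int d dvd (s - m * h)"
      by (rule dvd_add_left_iff) simp
    also have "\<dots> \<longleftrightarrow> s mod int d = s\<^sub>0"
      by (simp add: s\<^sub>0_def mod_eq_dvd_iff)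
    finally show ?thesis
      using that by simp
  qed
  have "(\<Sum>k\<in>{0..<int d}. braket d \<psi> (Dop d m k \<psi>))
      = (\<Sum>s\<in>{0..<int d}. cnj (\<psi> s) * \<psi> (r s) * (\<Sum>k\<in>{0..<int d}. omega d powi (k * (h * m + r s))))"
    unfolding braket_def Dop_apply[where \<psi> = \<psi>, OF h periodic] r_def sum_distrib_left
    by (subst sum.swap) (simp add: mult_ac)
  also have "\<dots> = (\<Sum>s\<in>{0..<int d}. if s = s\<^sub>0 then of_nat d * cnj (\<psi> s) * \<psi> (r s) else 0)"
    by (intro sum.cong refl) (simp add: sum_omega_powi[OF \<open>d > 0\<close>] resonance)
  also have "\<dots> = of_nat d * cnj (\<psi> s\<^sub>0) * \<psi> (r s\<^sub>0)"
    using \<open>d > 0\<close> by (simp add: s\<^sub>0_def)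
  also have "r s\<^sub>0 = (- (m * h)) mod int d"
    unfolding r_def s\<^sub>0_def mod_diff_left_eq hm by (rule mod_mult_self1)
  finally show ?thesis
    by (simp add: s\<^sub>0_def periodic)
qed

lemma sum_braket_Dop_minus_double:
  assumes "odd d" and periodic: "\<And>x. \<psi> (x mod int d) = \<psi> x"
  shows "(\<Sum>k=1..int d - 1. braket d \<psi> (Dop d (-2 * j) k \<psi>))
           = of_nat d * cnj (\<psi> (- j)) * \<psi> j - braket d \<psi> (Xpow d (-2 * j) \<psi>)"
proof -
  define h where "h = (int d + 1) div 2"
  have h: "2 * h = int d + 1"
    using assms(1) unfolding h_def by presburger
  have "-2 * j * h = - j + (- j) * int d"
    using arg_cong[OF h, of "(*) (- j)"] by (simp add: algebra_simps)
  then have "\<psi> (-2 * j * h) = \<psi> (- j)" and "\<psi> (- (-2 * j * h)) = \<psi> j"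
    by (metis periodic mod_mult_self1, metis periodic mod_mult_self1 minus_add_distrib minus_minus
        mult_minus_left)
  moreover have "{0..<int d} = insert 0 {1..int d - 1}"
    using assms(1) by (auto simp: odd_pos)
  ultimately show ?thesis
    using sum_braket_Dop[where \<psi> = \<psi> and m = "-2 * j", OF h periodic]
    by (simp add: Dop_0 eq_diff_eq add.commute)
qed

definition X_overlap_eq :: "nat \<Rightarrow> (int \<Rightarrow> complex) \<Rightarrow> int \<Rightarrow> bool" where
  "X_overlap_eq d \<psi> j \<longleftrightarrow>
     complex_of_real (sqrt (real d + 1)) * braket d \<psi> (Xpow d (-2 * j) \<psi>)
       = (\<psi> j)\<^sup>2 / (complex_of_real (cmod (\<psi> j)))\<^sup>2"

definition displacement_sum_eq :: "nat \<Rightarrow> (int \<Rightarrow> complex) \<Rightarrow> int \<Rightarrow> bool" where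
  "displacement_sum_eq d \<psi> m \<longleftrightarrow>
     (\<Sum>k=1..int d - 1. braket d \<psi> (Dop d m k \<psi>))
       = - complex_of_real (sqrt (real d + 1)) * braket d \<psi> (Xpow d m \<psi>)"

lemma displacement_sum_eq_mod:
  assumes "odd d"
  shows "displacement_sum_eq d \<psi> (m mod int d) \<longleftrightarrow> displacement_sum_eq d \<psi> m"
  by (simp add: displacement_sum_eq_def Dop_mod[OF assms] Xpow_mod)

lemma X_overlap_eq_iff_displacement_sum_eq:
  assumes "odd d" and periodic: "\<And>x. \<psi> (x mod int d) = \<psi> x"
    and antisym: "\<psi> (- j) = - cnj (\<psi> j)"
    and norm: "real d * (cmod (\<psi> j))\<^sup>2 * sqrt (real d + 1) = sqrt (real d + 1) - 1"
  shows "X_overlap_eq d \<psi> j \<longleftrightarrow> displacement_sum_eq d \<psi> (-2 * j)"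
proof -
  define S where "S = complex_of_real (sqrt (real d + 1))"
  define n2 where "n2 = complex_of_real ((cmod (\<psi> j))\<^sup>2)"
  define a where "a = braket d \<psi> (Xpow d (-2 * j) \<psi>)"
  have "sqrt (real d + 1) > 1"
    using assms(1) by (simp add: odd_pos)
  then have "S \<noteq> 1"
    by (auto simp: S_def)
  have norm': "of_nat d * n2 * S = S - 1"
    using arg_cong[OF norm, of complex_of_real] by (simp add: S_def n2_def)
  then have "of_nat d * n2 \<noteq> 0"
    using \<open>S \<noteq> 1\<close> by (metis mult_zero_left right_minus_eq)
  have "displacement_sum_eq d \<psi> (-2 * j) \<longleftrightarrow> - of_nat d * (\<psi> j)\<^sup>2 - a = - S * a"
    unfolding displacement_sum_eq_def antisym
      sum_braket_Dop_minus_double[where \<psi> = \<psi>, OF assms(1) periodic]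
    by (simp add: S_def a_def power2_eq_square mult.assoc)
  also have "\<dots> \<longleftrightarrow> (S - 1) * a = of_nat d * (\<psi> j)\<^sup>2"
    by (auto simp: algebra_simps)
  also have "(S - 1) * a = of_nat d * n2 * (S * a)"
    using norm' by (simp add: mult.assoc)
  also have "of_nat d * (\<psi> j)\<^sup>2 = of_nat d * n2 * ((\<psi> j)\<^sup>2 / n2)"
    using \<open>of_nat d * n2 \<noteq> 0\<close> by simp
  also have "of_nat d * n2 * (S * a) = of_nat d * n2 * ((\<psi> j)\<^sup>2 / n2) \<longleftrightarrow> X_overlap_eq d \<psi> j"
    using \<open>of_nat d * n2 \<noteq> 0\<close>
    by (auto simp: X_overlap_eq_def S_def a_def n2_def eq_divide_eq mult_ac)
  finally show ?thesis ..
qed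

lemma all_nonzero_mod_minus_double_iff:
  assumes "odd d" and mod_invariant: "\<And>m. P (m mod int d) \<longleftrightarrow> P m"
  shows "(\<forall>j. j mod int d \<noteq> 0 \<longrightarrow> P (-2 * j)) \<longleftrightarrow> (\<forall>m. m mod int d \<noteq> 0 \<longrightarrow> P m)"
proof -
  have "coprime (int d) 2"
    using assms(1) by (simp add: coprime_commute)
  then have nonzero: "(-2 * j) mod int d \<noteq> 0 \<longleftrightarrow> j mod int d \<noteq> 0" for j
    by (auto simp: mod_eq_0_iff_dvd coprime_dvd_mult_right_iff)
  define h where "h = (int d + 1) div 2"
  have h: "2 * h = int d + 1"
    using assms(1) unfolding h_def by presburger
  have "-2 * (- (m * h)) = m + m * int d" for m
    using arg_cong[OF h, of "(*) m"] by (simp add: algebra_simps)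
  then have inverse: "(-2 * (- (m * h))) mod int d = m mod int d" for m
    by simp
  show ?thesis
  proof
    assume P_double: "\<forall>j. j mod int d \<noteq> 0 \<longrightarrow> P (-2 * j)"
    show "\<forall>m. m mod int d \<noteq> 0 \<longrightarrow> P m"
    proof (intro allI impI)
      fix m
      assume "m mod int d \<noteq> 0"
      then have "(- (m * h)) mod int d \<noteq> 0"
        using nonzero[of "- (m * h)"] inverse[of m] by simp
      then have "P (-2 * (- (m * h)))"
        using P_double by blast
      then show "P m"
        using mod_invariant inverse by metis
    qed
  next
    assume "\<forall>m. m mod int d \<noteq> 0 \<longrightarrow> P m"
    then show "\<forall>j. j mod int d \<noteq> 0 \<longrightarrow> P (-2 * j)"
      using nonzero by blast
  qed
qed

lemma normalisation_identity:
  assumes "x0 = -2 - sqrt (real d + 1)" and "N\<^sup>2 = 1 / (real d - 1 - x0)"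
  shows "real d * N\<^sup>2 * sqrt (real d + 1) = sqrt (real d + 1) - 1"
proof -
  define S where "S = sqrt (real d + 1)"
  have "S \<ge> 1" and "S\<^sup>2 = real d + 1"
    by (simp_all add: S_def)
  moreover have "x0 = -2 - S"
    using assms(1) by (simp add: S_def)
  ultimately have N2: "N\<^sup>2 = 1 / (S * (S + 1))" and d: "real d = (S - 1) * (S + 1)"
    using assms(2) by (simp_all add: power2_eq_square algebra_simps)
  have "real d * N\<^sup>2 * S = S - 1"
    unfolding N2 d using \<open>S \<ge> 1\<close> by (simp add: divide_simps)
  then show ?thesis
    by (simp add: S_def)
qed

lemma Psi_mod: "Psi d N s0 v (x mod int d) = Psi d N s0 v x"
  by (simp add: Psi_def)

lemma Psi_uminus:
  assumes "j mod int d \<noteq> 0" and "v ((- j) mod int d) = - cnj (v (j mod int d))"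
  shows "Psi d N s0 v (- j) = - cnj (Psi d N s0 v j)"
  using assms by (simp add: Psi_def zmod_zminus1_not_zero)

lemma norm_Psi:
  assumes "j mod int d \<noteq> 0" and "cmod (v (j mod int d)) = 1"
  shows "cmod (Psi d N s0 v j) = \<bar>N\<bar>"
  using assms by (simp add: Psi_def norm_mult)

theorem proposition1:
  fixes d :: nat and x0 N :: real and s0 :: complex and v :: "int \<Rightarrow> complex"
  assumes "odd d" and "d \<ge> 3"
    and "x0 = -2 - sqrt (real d + 1)"
    and "s0\<^sup>2 = complex_of_real x0" and "Re s0 = 0"
    and "\<And>j. j mod int d \<noteq> 0 \<Longrightarrow> cmod (v (j mod int d)) = 1"
    and "\<And>j. j mod int d \<noteq> 0 \<Longrightarrow> v ((- j) mod int d) = - cnj (v (j mod int d))"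
    and "N\<^sup>2 = 1 / (real d - 1 - x0)"
  shows "(\<forall>j::int. j mod int d \<noteq> 0 \<longrightarrow>
           ((complex_of_real (sqrt (real d + 1)) * braket d (Psi d N s0 v) (Xpow d (-2 * j) (Psi d N s0 v))
               = (Psi d N s0 v j)\<^sup>2 / (complex_of_real (cmod (Psi d N s0 v j)))\<^sup>2)
            \<longleftrightarrow>
            ((\<Sum>k=1..int d - 1. braket d (Psi d N s0 v) (Dop d (-2 * j) k (Psi d N s0 v)))
               = - complex_of_real (sqrt (real d + 1)) * braket d (Psi d N s0 v) (Xpow d (-2 * j) (Psi d N s0 v)))))
       \<and>
         ((\<forall>j::int. j mod int d \<noteq> 0 \<longrightarrow>
            complex_of_real (sqrt (real d + 1)) * braket d (Psi d N s0 v) (Xpow d (-2 * j) (Psi d N s0 v))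
               = (Psi d N s0 v j)\<^sup>2 / (complex_of_real (cmod (Psi d N s0 v j)))\<^sup>2)
          \<longleftrightarrow>
          (\<forall>j::int. j mod int d \<noteq> 0 \<longrightarrow>
            (\<Sum>k=1..int d - 1. braket d (Psi d N s0 v) (Dop d j k (Psi d N s0 v)))
               = - complex_of_real (sqrt (real d + 1)) * braket d (Psi d N s0 v) (Xpow d j (Psi d N s0 v))))"
proof -
  \<comment> \<open>Only components at nonzero indices enter.\<close>
  let ?\<Psi> = "Psi d N s0 v"
  have pointwise: "X_overlap_eq d ?\<Psi> j \<longleftrightarrow> displacement_sum_eq d ?\<Psi> (-2 * j)"
    if "j mod int d \<noteq> 0" for j
  proof (rule X_overlap_eq_iff_displacement_sum_eq[where \<psi> = ?\<Psi>, OF \<open>odd d\<close> Psi_mod])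
    show "?\<Psi> (- j) = - cnj (?\<Psi> j)"
      by (rule Psi_uminus[OF that assms(7)[OF that]])
    show "real d * (cmod (?\<Psi> j))\<^sup>2 * sqrt (real d + 1) = sqrt (real d + 1) - 1"
      using normalisation_identity[OF assms(3,8)] norm_Psi[where v = v, OF that assms(6)[OF that]]
      by simp
  qed
  moreover have "(\<forall>j. j mod int d \<noteq> 0 \<longrightarrow> displacement_sum_eq d ?\<Psi> (-2 * j))
      \<longleftrightarrow> (\<forall>m. m mod int d \<noteq> 0 \<longrightarrow> displacement_sum_eq d ?\<Psi> m)"
    using \<open>odd d\<close> by (rule all_nonzero_mod_minus_double_iff)
      (rule displacement_sum_eq_mod[OF \<open>odd d\<close>])
  ultimately show ?thesis
    unfolding X_overlap_eq_def displacement_sum_eq_def by blast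
qed

end
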